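(* Fix an integer $q\ge 2$. There exist constants $c>0$ and $n_0$ depending only on $q$ such that for all $n \ge n_0$, all positive integers $t \le 10\sqrt{n}$, and all $S \subseteq [q]^n$ with $|S| \ge n^4 H_q(n,t)$, we have \[ \Delta(G[S]) \ge c\,\frac{n^{3/2}}{H_q(n,t)}\,|S|. \]
   Context: $d(x,y)$ is the Hamming distance on $[q]^n$ (number of differing coordinates). $V_q(n,r) = \sum_{i=0}^{r}\binom{n}{i}(q-1)^i$ and $H_q(n,t) = q^n / V_q(n,t)$. $G = G_{q,n,t}$ is the graph with vertex set $[q]^n$ in which two distinct vertices are adjacent iff their Hamming distance is at most $2t$; $G[S]$ is its induced subgraph on $S$, and $\Delta(\cdot)$ denotes maximum degree. *)

theory Defs
  imports "HOL-Analysis.Analysis"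
begin

text \<open>The Hamming cube [q]^n, represented by functions nat => nat that take
values in {0..<q} on coordinates 0..<n and are 0 elsewhere.\<close>
definition cube :: "nat \<Rightarrow> nat \<Rightarrow> (nat \<Rightarrow> nat) set" where
  "cube q n = {x. (\<forall>i<n. x i < q) \<and> (\<forall>i\<ge>n. x i = 0)}"

definition hamming :: "nat \<Rightarrow> (nat \<Rightarrow> nat) \<Rightarrow> (nat \<Rightarrow> nat) \<Rightarrow> nat" where
  "hamming n x y = card {i. i < n \<and> x i \<noteq> y i}"

definition ball_vol :: "nat \<Rightarrow> nat \<Rightarrow> nat \<Rightarrow> nat" where
  "ball_vol q n r = (\<Sum>i=0..r. (n choose i) * (q - 1) ^ i)"

definition hamming_bound :: "nat \<Rightarrow> nat \<Rightarrow> nat \<Rightarrow> real" where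
  "hamming_bound q n t = real q ^ n / real (ball_vol q n t)"

text \<open>Degree of v in the induced subgraph G_{q,n,t}[S]: distinct vertices of S
at Hamming distance at most 2t.\<close>
definition induced_degree :: "nat \<Rightarrow> nat \<Rightarrow> (nat \<Rightarrow> nat) set \<Rightarrow> (nat \<Rightarrow> nat) \<Rightarrow> nat" where
  "induced_degree n t S v = card {u \<in> S. u \<noteq> v \<and> hamming n u v \<le> 2 * t}"

definition max_degree :: "nat \<Rightarrow> nat \<Rightarrow> (nat \<Rightarrow> nat) set \<Rightarrow> nat" where
  "max_degree n t S = (if S = {} then 0 else Max (induced_degree n t S ` S))"

end

theory Submission
  imports Defs
begin

text \<open>Let \<open>B(x)\<close> be the radius-\<open>t\<close> ball around \<open>x\<close> and \<open>V = V_q(n,t)\<close>. Double counting the pairs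
  \<open>(x, y)\<close> with \<open>x \<in> S\<close> and \<open>y \<in> B(x)\<close>, Cauchy-Schwarz gives
  \<open>(|S| V)^2 \<le> q^n \<Sum>_{x,x'\<in>S} |B(x) \<inter> B(x')|\<close>. A common point of \<open>B(x)\<close> and \<open>B(x')\<close> differs
  from \<open>x\<close> or from \<open>x'\<close> in at least \<open>m\<close> of any \<open>2m - 1\<close> coordinates where \<open>x\<close> and \<open>x'\<close> differ,
  and prescribing \<open>m\<close> deviations from the centre shrinks a ball by a factor \<open>(t/(n-t))^m\<close>.
  Taking \<open>m = 1\<close> for the at most \<open>V_q(n,4)\<close> points at distance at most 4, \<open>m = 3\<close> for the
  remaining neighbours in \<open>G\<close>, and using that the balls are disjoint beyond distance \<open>2t\<close>,
  one gets \<open>|S| \<le> H_q(n,t) (1 + 2 V_q(n,4) r + 20 \<Delta> r^3)\<close> with \<open>r = t/(n-t) = O(n^{-1/2})\<close>.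
  Since \<open>V_q(n,4) = O(n^4)\<close> while \<open>|S| \<ge> n^4 H_q(n,t)\<close>, the term \<open>20 \<Delta> r^3\<close> must account
  for at least half of the bound, i.e. \<open>\<Delta> = \<Omega>(n^{3/2} |S| / H_q(n,t))\<close>.\<close>

definition ball_on :: "nat \<Rightarrow> (nat \<Rightarrow> nat) \<Rightarrow> nat set \<Rightarrow> nat \<Rightarrow> (nat \<Rightarrow> nat) set" where
  "ball_on q x A r =
     {y. (\<forall>i\<in>A. y i < q) \<and> (\<forall>i. i \<notin> A \<longrightarrow> y i = x i) \<and> card {i\<in>A. y i \<noteq> x i} \<le> r}"

lemma sum_subsets_card_le:
  assumes "finite A"
  shows "(\<Sum>D | D \<subseteq> A \<and> card D \<le> r. f (card D)) = (\<Sum>i=0..r. (card A choose i) * (f i :: nat))"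
proof -
  have "(\<Sum>D | D \<subseteq> A \<and> card D \<le> r. f (card D)) =
        (\<Sum>i=0..r. \<Sum>D \<in> {D. D \<subseteq> A \<and> card D \<le> r \<and> card D = i}. f (card D))"
    using assms by (subst sum.group[of _ "{0..r}" card, symmetric]) (auto simp: conj_assoc)
  also have "\<dots> = (\<Sum>i=0..r. (card A choose i) * f i)"
  proof (rule sum.cong[OF refl])
    fix i assume "i \<in> {0..r}"
    then have "{D. D \<subseteq> A \<and> card D \<le> r \<and> card D = i} = {D. D \<subseteq> A \<and> card D = i}" by auto
    then show "(\<Sum>D \<in> {D. D \<subseteq> A \<and> card D \<le> r \<and> card D = i}. f (card D)) = (card A choose i) * f i"
      using n_subsets[OF assms, of i] by simp
  qed
  finally show ?thesis .
qed

lemma card_ball_on: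
  assumes A: "finite A" and x: "\<forall>i\<in>A. x i < q"
  shows "card (ball_on q x A r) = ball_vol q (card A) r"
proof -
  define P where "P = (SIGMA D:{D. D \<subseteq> A \<and> card D \<le> r}. PiE D (\<lambda>i. {..<q} - {x i}))"
  define extend where "extend = (\<lambda>(D, h) i. if i \<in> D then h i else x i)"
  define support where "support y = {i\<in>A. y i \<noteq> x i}" for y
  have supp: "support (extend (D, h)) = D" if "(D, h) \<in> P" for D h
    using that unfolding P_def extend_def support_def by (auto simp: PiE_iff)
  have "bij_betw extend P (ball_on q x A r)"
  proof (rule bij_betw_byWitness[where f' = "\<lambda>y. (support y, restrict y (support y))"])
    show "\<forall>a\<in>P. (support (extend a), restrict (extend a) (support (extend a))) = a"
    proof
      fix a assume a: "a \<in> P"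
      obtain D h where [simp]: "a = (D, h)" by fastforce
      have "restrict (extend (D, h)) D = h"
        using a by (auto simp: P_def extend_def PiE_iff extensional_def)
      then show "(support (extend a), restrict (extend a) (support (extend a))) = a"
        using supp a by simp
    qed
    show "\<forall>y\<in>ball_on q x A r. extend (support y, restrict y (support y)) = y"
      by (auto simp: ball_on_def extend_def support_def fun_eq_iff)
    show "extend ` P \<subseteq> ball_on q x A r"
    proof
      fix y assume "y \<in> extend ` P"
      then obtain D h where Dh: "(D, h) \<in> P" "y = extend (D, h)" by auto
      then have "card (support y) \<le> r" using supp by (auto simp: P_def)
      with Dh x show "y \<in> ball_on q x A r"
        unfolding ball_on_def support_def by (auto simp: P_def extend_def PiE_iff)
    qed
    show "(\<lambda>y. (support y, restrict y (support y))) ` ball_on q x A r \<subseteq> P"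
      by (auto simp: ball_on_def support_def P_def)
  qed
  then have "card (ball_on q x A r) = card P"
    by (simp add: bij_betw_same_card)
  also have "\<dots> = (\<Sum>D | D \<subseteq> A \<and> card D \<le> r. card (PiE D (\<lambda>i. {..<q} - {x i})))"
    unfolding P_def using A by (intro card_SigmaI) (auto intro: finite_subset finite_PiE)
  also have "\<dots> = (\<Sum>D | D \<subseteq> A \<and> card D \<le> r. (q - 1) ^ card D)"
  proof (rule sum.cong[OF refl])
    fix D assume D: "D \<in> {D. D \<subseteq> A \<and> card D \<le> r}"
    then have "finite D" using A finite_subset by auto
    then have "card (PiE D (\<lambda>i. {..<q} - {x i})) = (\<Prod>i\<in>D. card ({..<q} - {x i}))"
      by (rule card_PiE)
    also have "\<dots> = (\<Prod>i\<in>D. q - 1)"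
      using D x by (intro prod.cong) auto
    finally have "card (PiE D (\<lambda>i. {..<q} - {x i})) = (\<Prod>i\<in>D. q - 1)" .
    then show "card (PiE D (\<lambda>i. {..<q} - {x i})) = (q - 1) ^ card D" by simp
  qed
  also have "\<dots> = ball_vol q (card A) r"
    unfolding ball_vol_def using sum_subsets_card_le[OF A] by simp
  finally show ?thesis .
qed

lemma ball_vol_self: "q \<ge> 1 \<Longrightarrow> ball_vol q n n = q ^ n"
  using binomial_ring[of "q - 1" 1 n] by (simp add: ball_vol_def atLeast0AtMost)

lemma ball_vol_ge_1: "ball_vol q n r \<ge> 1"
  unfolding ball_vol_def by (rule order.trans[OF _ member_le_sum[of 0]]) auto

lemma finite_ball_on: "finite A \<Longrightarrow> \<forall>i\<in>A. x i < q \<Longrightarrow> finite (ball_on q x A r)"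
  using card_ball_on ball_vol_ge_1 by (metis card_ge_0_finite less_le_trans zero_less_one)

lemma cube_eq_ball_on: "cube q n = ball_on q (\<lambda>_. 0) {..<n} n"
proof -
  have "card {i\<in>{..<n}. y i \<noteq> 0} \<le> n" for y :: "nat \<Rightarrow> nat"
    using card_mono[of "{..<n}" "{i\<in>{..<n}. y i \<noteq> 0}"] by auto
  then show ?thesis unfolding cube_def ball_on_def by (auto simp del: neq0_conv)
qed

lemma card_cube: "q \<ge> 1 \<Longrightarrow> card (cube q n) = q ^ n"
  using card_ball_on[of "{..<n}" "\<lambda>_. 0" q n] ball_vol_self[of q n] by (simp add: cube_eq_ball_on)

lemma finite_cube: "q \<ge> 1 \<Longrightarrow> finite (cube q n)"
  by (simp add: card_ge_0_finite card_cube)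

lemma cube_ball_eq_ball_on:
  assumes "x \<in> cube q n"
  shows "{y \<in> cube q n. hamming n x y \<le> r} = ball_on q x {..<n} r"
proof -
  have "{i. i < n \<and> x i \<noteq> y i} = {i\<in>{..<n}. y i \<noteq> x i}" for y
    by auto
  then show ?thesis using assms unfolding cube_def ball_on_def hamming_def by auto
qed

lemma hamming_le_of_ball_on:
  "y \<in> ball_on q x {..<n} t \<Longrightarrow> hamming n x y \<le> t"
  unfolding ball_on_def hamming_def by (simp add: conj_commute eq_commute[of "x _"])

lemma hamming_commute: "hamming n x y = hamming n y x"
  unfolding hamming_def by (simp only: eq_commute)

lemma hamming_triangle: "hamming n x z \<le> hamming n x y + hamming n y z"
proof -
  have "card {i. i < n \<and> x i \<noteq> z i} \<le> card ({i. i < n \<and> x i \<noteq> y i} \<union> {i. i < n \<and> y i \<noteq> z i})"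
    by (intro card_mono) auto
  also have "\<dots> \<le> card {i. i < n \<and> x i \<noteq> y i} + card {i. i < n \<and> y i \<noteq> z i}"
    by (rule card_Un_le)
  finally show ?thesis unfolding hamming_def .
qed

lemma hamming_pos:
  assumes "x \<in> cube q n" "y \<in> cube q n" "x \<noteq> y"
  shows "hamming n x y > 0"
proof -
  obtain i where "x i \<noteq> y i" using assms(3) by auto
  with assms(1,2) have "i \<in> {i. i < n \<and> x i \<noteq> y i}"
    unfolding cube_def by (cases "i < n") auto
  then show ?thesis unfolding hamming_def by (auto simp: card_gt_0_iff)
qed

lemma choose_diff_mult_le:
  "j + m \<le> t \<Longrightarrow> t \<le> n \<Longrightarrow> ((n - m) choose j) * (n - t) ^ m \<le> (n choose (j + m)) * t ^ m"
proof (induction m arbitrary: j)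
  case 0
  then show ?case by simp
next
  case (Suc m)
  have IH: "((n - m) choose (j + 1)) * (n - t) ^ m \<le> (n choose (j + 1 + m)) * t ^ m"
    using Suc.IH[of "j + 1"] Suc.prems by simp
  have nm: "n - m = Suc (n - Suc m)" using Suc.prems by simp
  have "((n - Suc m) choose j) * (n - t) * (j + 1) \<le> ((n - Suc m) choose j) * (n - m) * t"
  proof -
    have "(n - t) * (j + 1) \<le> (n - m) * t" using Suc.prems by (intro mult_mono) auto
    then show ?thesis by (metis mult.assoc mult_le_mono2)
  qed
  also have "\<dots> = ((n - m) choose (j + 1)) * (j + 1) * t"
    using Suc_times_binomial_eq[of "n - Suc m" j] nm by (simp add: mult_ac)
  finally have step: "((n - Suc m) choose j) * (n - t) \<le> ((n - m) choose (j + 1)) * t"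
    by (metis mult.assoc mult.commute mult_le_cancel1 Suc_eq_plus1 zero_less_Suc)
  have "((n - Suc m) choose j) * (n - t) ^ Suc m = (((n - Suc m) choose j) * (n - t)) * (n - t) ^ m"
    by simp
  also have "\<dots> \<le> t * (((n - m) choose (j + 1)) * (n - t) ^ m)"
    using step by (simp add: mult_right_mono mult_ac)
  also have "\<dots> \<le> t * ((n choose (j + 1 + m)) * t ^ m)"
    using IH by (rule mult_left_mono) simp
  finally show ?case by (simp add: mult_ac)
qed

lemma ball_vol_shift_le:
  assumes "m \<le> t" "t \<le> n"
  shows "(q - 1) ^ m * ball_vol q (n - m) (t - m) * (n - t) ^ m \<le> t ^ m * ball_vol q n t"
proof -
  have "(q - 1) ^ m * ball_vol q (n - m) (t - m) * (n - t) ^ m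
      = (\<Sum>j=0..t-m. ((n - m) choose j) * (n - t) ^ m * (q - 1) ^ (j + m))"
    unfolding ball_vol_def by (simp add: sum_distrib_left sum_distrib_right power_add mult_ac)
  also have "\<dots> \<le> (\<Sum>j=0..t-m. t ^ m * ((n choose (j + m)) * (q - 1) ^ (j + m)))"
    using assms choose_diff_mult_le[of _ m t n] by (intro sum_mono) (simp add: mult_ac)
  also have "\<dots> = t ^ m * (\<Sum>i=m..t. (n choose i) * (q - 1) ^ i)"
    using sum.shift_bounds_cl_nat_ivl[of "\<lambda>i. (n choose i) * (q - 1) ^ i" 0 m "t - m"] assms
    by (simp add: sum_distrib_left)
  also have "\<dots> \<le> t ^ m * ball_vol q n t"
    unfolding ball_vol_def by (intro mult_left_mono sum_mono2) auto
  finally show ?thesis .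
qed

text \<open>Points of a ball deviating from its centre on every coordinate of \<open>M\<close> lie in
  \<open>(q-1)^|M|\<close> balls of radius \<open>t - |M|\<close> on the remaining coordinates.\<close>
lemma card_ball_deviating_le:
  assumes x: "x \<in> cube q n" and M: "M \<subseteq> {..<n}" and t: "t \<le> n"
  shows "card {y \<in> ball_on q x {..<n} t. \<forall>i\<in>M. y i \<noteq> x i} * (n - t) ^ card M
         \<le> t ^ card M * ball_vol q n t"
proof (cases "card M \<le> t")
  case False
  have "{y \<in> ball_on q x {..<n} t. \<forall>i\<in>M. y i \<noteq> x i} = {}"
  proof (rule ccontr)
    assume "\<not> ?thesis"
    then obtain y where y: "y \<in> ball_on q x {..<n} t" "\<forall>i\<in>M. y i \<noteq> x i" by auto
    have "card M \<le> card {i\<in>{..<n}. y i \<noteq> x i}" using y M by (intro card_mono) auto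
    then show False using y False unfolding ball_on_def by auto
  qed
  then show ?thesis by (simp only: card.empty mult_0)
next
  case True
  define m where "m = card M"
  have fM: "finite M" using M finite_subset by auto
  define H where "H = PiE M (\<lambda>i. {..<q} - {x i})"
  define extend where "extend h i = (if i \<in> M then h i else x i)" for h i
  have xq: "\<forall>i<n. x i < q" using x unfolding cube_def by auto
  have cover: "{y \<in> ball_on q x {..<n} t. \<forall>i\<in>M. y i \<noteq> x i}
      \<subseteq> (\<Union>h\<in>H. ball_on q (extend h) ({..<n} - M) (t - m))"
  proof
    fix y assume y: "y \<in> {y \<in> ball_on q x {..<n} t. \<forall>i\<in>M. y i \<noteq> x i}"
    have "card ({i\<in>{..<n}. y i \<noteq> x i} - M) = card {i\<in>{..<n}. y i \<noteq> x i} - m"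
      unfolding m_def using y M by (intro card_Diff_subset fM) auto
    also have "\<dots> \<le> t - m" using y unfolding ball_on_def by auto
    also have "{i\<in>{..<n}. y i \<noteq> x i} - M = {i \<in> {..<n} - M. y i \<noteq> extend (restrict y M) i}"
      unfolding extend_def by auto
    finally have "y \<in> ball_on q (extend (restrict y M)) ({..<n} - M) (t - m)"
      using y unfolding ball_on_def extend_def by auto
    moreover have "restrict y M \<in> H" using y M unfolding H_def ball_on_def by auto
    ultimately show "y \<in> (\<Union>h\<in>H. ball_on q (extend h) ({..<n} - M) (t - m))" by auto
  qed
  have fH: "finite H" unfolding H_def using fM by (intro finite_PiE) auto
  have "card H = (\<Prod>i\<in>M. card ({..<q} - {x i}))" unfolding H_def using card_PiE[OF fM] .
  also have "\<dots> = (\<Prod>i\<in>M. q - 1)" using M xq by (intro prod.cong) auto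
  finally have cH: "card H = (q - 1) ^ m" by (simp add: m_def)
  have ext_q: "\<forall>i\<in>{..<n} - M. extend h i < q" for h
    using xq unfolding extend_def by auto
  have "card {y \<in> ball_on q x {..<n} t. \<forall>i\<in>M. y i \<noteq> x i}
      \<le> card (\<Union>h\<in>H. ball_on q (extend h) ({..<n} - M) (t - m))"
    using fH ext_q by (intro card_mono[OF _ cover] finite_UN_I finite_ball_on) auto
  also have "\<dots> \<le> (\<Sum>h\<in>H. card (ball_on q (extend h) ({..<n} - M) (t - m)))"
    by (rule card_UN_le[OF fH])
  also have "\<dots> = (\<Sum>h\<in>H. ball_vol q (n - m) (t - m))"
    using ext_q M fM by (intro sum.cong refl) (simp add: card_ball_on card_Diff_subset m_def)
  also have "\<dots> = (q - 1) ^ m * ball_vol q (n - m) (t - m)" using cH by simp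
  finally have "card {y \<in> ball_on q x {..<n} t. \<forall>i\<in>M. y i \<noteq> x i} * (n - t) ^ m
      \<le> (q - 1) ^ m * ball_vol q (n - m) (t - m) * (n - t) ^ m"
    by (rule mult_right_mono) simp
  also have "\<dots> \<le> t ^ m * ball_vol q n t" using ball_vol_shift_le True t m_def by simp
  finally show ?thesis unfolding m_def .
qed

lemma card_ball_many_deviating_le:
  assumes z: "z \<in> cube q n" and T: "T \<subseteq> {..<n}" and t: "t \<le> n"
  shows "card {y \<in> ball_on q z {..<n} t. m \<le> card {i\<in>T. y i \<noteq> z i}} * (n - t) ^ m
         \<le> (card T choose m) * (t ^ m * ball_vol q n t)"
proof -
  have fT: "finite T" using T finite_subset by auto
  define Ms where "Ms = {M. M \<subseteq> T \<and> card M = m}"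
  have fMs: "finite Ms" unfolding Ms_def using fT by auto
  have cover: "{y \<in> ball_on q z {..<n} t. m \<le> card {i\<in>T. y i \<noteq> z i}}
      \<subseteq> (\<Union>M\<in>Ms. {y \<in> ball_on q z {..<n} t. \<forall>i\<in>M. y i \<noteq> z i})"
  proof
    fix y assume y: "y \<in> {y \<in> ball_on q z {..<n} t. m \<le> card {i\<in>T. y i \<noteq> z i}}"
    then obtain M where "M \<subseteq> {i\<in>T. y i \<noteq> z i}" "card M = m"
      by (metis (lifting) mem_Collect_eq obtain_subset_with_card_n)
    then show "y \<in> (\<Union>M\<in>Ms. {y \<in> ball_on q z {..<n} t. \<forall>i\<in>M. y i \<noteq> z i})"
      using y unfolding Ms_def by auto
  qed
  have zq: "\<forall>i\<in>{..<n}. z i < q" using z unfolding cube_def by auto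
  have "card {y \<in> ball_on q z {..<n} t. m \<le> card {i\<in>T. y i \<noteq> z i}}
      \<le> card (\<Union>M\<in>Ms. {y \<in> ball_on q z {..<n} t. \<forall>i\<in>M. y i \<noteq> z i})"
    using fMs finite_ball_on[OF _ zq] by (intro card_mono[OF _ cover]) auto
  also have "\<dots> \<le> (\<Sum>M\<in>Ms. card {y \<in> ball_on q z {..<n} t. \<forall>i\<in>M. y i \<noteq> z i})"
    by (rule card_UN_le[OF fMs])
  finally have "card {y \<in> ball_on q z {..<n} t. m \<le> card {i\<in>T. y i \<noteq> z i}} * (n - t) ^ m
      \<le> (\<Sum>M\<in>Ms. card {y \<in> ball_on q z {..<n} t. \<forall>i\<in>M. y i \<noteq> z i}) * (n - t) ^ m"
    by (rule mult_right_mono) simp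
  also have "\<dots> = (\<Sum>M\<in>Ms. card {y \<in> ball_on q z {..<n} t. \<forall>i\<in>M. y i \<noteq> z i} * (n - t) ^ m)"
    by (rule sum_distrib_right)
  also have "\<dots> \<le> (\<Sum>M\<in>Ms. t ^ m * ball_vol q n t)"
    using card_ball_deviating_le[OF z _ t] T by (intro sum_mono) (auto simp: Ms_def)
  also have "\<dots> = (card T choose m) * (t ^ m * ball_vol q n t)"
    using n_subsets[OF fT, of m] unfolding Ms_def by simp
  finally show ?thesis .
qed

lemma card_ball_inter_le:
  assumes x: "x \<in> cube q n" and x': "x' \<in> cube q n"
    and T: "T \<subseteq> {i. i < n \<and> x i \<noteq> x' i}" and m: "2 * m \<le> card T + 1" and t: "t \<le> n"
  shows "card (ball_on q x {..<n} t \<inter> ball_on q x' {..<n} t) * (n - t) ^ m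
         \<le> 2 * ((card T choose m) * (t ^ m * ball_vol q n t))"
proof -
  have T': "T \<subseteq> {..<n}" using T by auto
  have fT: "finite T" using T' finite_subset by auto
  define Bad where "Bad z = {y \<in> ball_on q z {..<n} t. m \<le> card {i\<in>T. y i \<noteq> z i}}" for z
  have cover: "ball_on q x {..<n} t \<inter> ball_on q x' {..<n} t \<subseteq> Bad x \<union> Bad x'"
  proof
    fix y assume y: "y \<in> ball_on q x {..<n} t \<inter> ball_on q x' {..<n} t"
    have "card T \<le> card ({i\<in>T. y i \<noteq> x i} \<union> {i\<in>T. y i \<noteq> x' i})"
      using T fT by (intro card_mono) auto
    also have "\<dots> \<le> card {i\<in>T. y i \<noteq> x i} + card {i\<in>T. y i \<noteq> x' i}" by (rule card_Un_le)
    finally have "m \<le> card {i\<in>T. y i \<noteq> x i} \<or> m \<le> card {i\<in>T. y i \<noteq> x' i}" using m by linarith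
    then show "y \<in> Bad x \<union> Bad x'" using y unfolding Bad_def by auto
  qed
  have "finite (Bad z)" if "z \<in> cube q n" for z
    using that finite_ball_on[of "{..<n}" z q t] unfolding Bad_def cube_def by auto
  then have "card (ball_on q x {..<n} t \<inter> ball_on q x' {..<n} t) \<le> card (Bad x) + card (Bad x')"
    using x x' card_mono[OF _ cover] card_Un_le[of "Bad x" "Bad x'"] by (meson finite_UnI le_trans)
  then have "card (ball_on q x {..<n} t \<inter> ball_on q x' {..<n} t) * (n - t) ^ m
      \<le> card (Bad x) * (n - t) ^ m + card (Bad x') * (n - t) ^ m"
    by (metis add_mult_distrib mult_right_mono zero_le)
  also have "\<dots> \<le> 2 * ((card T choose m) * (t ^ m * ball_vol q n t))"
    using add_mono[OF card_ball_many_deviating_le[OF x T' t, of m] card_ball_many_deviating_le[OF x' T' t, of m]]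
    unfolding Bad_def by simp
  finally show ?thesis .
qed

lemma ball_inter_empty:
  assumes "2 * t < hamming n x x'"
  shows "ball_on q x {..<n} t \<inter> ball_on q x' {..<n} t = {}"
proof (rule ccontr)
  assume "\<not> ?thesis"
  then obtain y where "y \<in> ball_on q x {..<n} t" "y \<in> ball_on q x' {..<n} t" by auto
  then have "hamming n x y \<le> t" "hamming n y x' \<le> t"
    using hamming_le_of_ball_on hamming_commute by metis+
  then show False using hamming_triangle[of n x x' y] assms by linarith
qed

lemma card_ball_inter_le_ratio:
  assumes x: "x \<in> cube q n" and x': "x' \<in> cube q n" and m: "m \<ge> 1" "2 * m \<le> hamming n x x' + 1"
    and t: "t < n"
  shows "real (card (ball_on q x {..<n} t \<inter> ball_on q x' {..<n} t))
         \<le> 2 * real ((2 * m - 1) choose m) * (real t / real (n - t)) ^ m * real (ball_vol q n t)"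
proof -
  have "2 * m - 1 \<le> card {i. i < n \<and> x i \<noteq> x' i}" using m unfolding hamming_def by linarith
  then obtain T where T: "T \<subseteq> {i. i < n \<and> x i \<noteq> x' i}" "card T = 2 * m - 1"
    by (rule obtain_subset_with_card_n)
  have "card (ball_on q x {..<n} t \<inter> ball_on q x' {..<n} t) * (n - t) ^ m
      \<le> 2 * (((2 * m - 1) choose m) * (t ^ m * ball_vol q n t))"
    using card_ball_inter_le[OF x x' T(1), of m t] T(2) m t by simp
  then have "real (card (ball_on q x {..<n} t \<inter> ball_on q x' {..<n} t)) * real (n - t) ^ m
      \<le> 2 * real ((2 * m - 1) choose m) * real t ^ m * real (ball_vol q n t)"
    by (simp add: mult_ac flip: of_nat_mult of_nat_power)
  then have "real (card (ball_on q x {..<n} t \<inter> ball_on q x' {..<n} t))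
      \<le> 2 * real ((2 * m - 1) choose m) * real t ^ m * real (ball_vol q n t) / real (n - t) ^ m"
    using t by (simp add: pos_le_divide_eq)
  also have "\<dots> = 2 * real ((2 * m - 1) choose m) * (real t / real (n - t)) ^ m * real (ball_vol q n t)"
    by (simp add: power_divide)
  finally show ?thesis .
qed

lemma card_ball_inter_le_cases:
  assumes x: "x \<in> cube q n" and x': "x' \<in> cube q n" and t: "t < n"
  defines "r \<equiv> real t / real (n - t)" and "V \<equiv> real (ball_vol q n t)"
  shows "real (card (ball_on q x {..<n} t \<inter> ball_on q x' {..<n} t))
         \<le> (if x' = x then V else if hamming n x x' \<le> 4 then 2 * r * V
            else if hamming n x x' \<le> 2 * t then 20 * r ^ 3 * V else 0)"
proof -
  have xq: "\<forall>i\<in>{..<n}. x i < q" using x unfolding cube_def by auto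
  consider "x' = x" | "x' \<noteq> x" "hamming n x x' \<le> 4"
    | "x' \<noteq> x" "5 \<le> hamming n x x'" "hamming n x x' \<le> 2 * t" | "x' \<noteq> x" "2 * t < hamming n x x'"
    by linarith
  then show ?thesis
  proof cases
    case 1
    then show ?thesis using card_ball_on[of "{..<n}" x q t] xq by (simp add: V_def)
  next
    case 2
    then have "hamming n x x' > 0" using hamming_pos[OF x x'] by auto
    then show ?thesis
      using 2 card_ball_inter_le_ratio[OF x x', of 1 t] t unfolding r_def V_def by simp
  next
    case 3
    have "(5::nat) choose 3 = 10" by (simp add: numeral_eq_Suc)
    then show ?thesis
      using 3 card_ball_inter_le_ratio[OF x x', of 3 t] t unfolding r_def V_def by auto
  next
    case 4
    have "r \<ge> 0" "V \<ge> 0" unfolding r_def V_def by auto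
    then show ?thesis using 4 ball_inter_empty[OF 4(2)] by auto
  qed
qed

lemma card_near_le_ball_vol:
  assumes "S \<subseteq> cube q n" and "x \<in> cube q n"
  shows "card {x' \<in> S. hamming n x x' \<le> r} \<le> ball_vol q n r"
proof -
  have xq: "\<forall>i\<in>{..<n}. x i < q" using assms(2) unfolding cube_def by auto
  have "{x' \<in> S. hamming n x x' \<le> r} \<subseteq> ball_on q x {..<n} r"
    using assms cube_ball_eq_ball_on[OF assms(2)] by blast
  then have "card {x' \<in> S. hamming n x x' \<le> r} \<le> card (ball_on q x {..<n} r)"
    using finite_ball_on[OF _ xq] by (intro card_mono) auto
  then show ?thesis using card_ball_on[of "{..<n}" x q r] xq by simp
qed

lemma sum_card_ball_inter_le:
  assumes q: "q \<ge> 1" and S: "S \<subseteq> cube q n" and x: "x \<in> S" and t: "t < n"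
  defines "r \<equiv> real t / real (n - t)" and "V \<equiv> real (ball_vol q n t)"
    and "W \<equiv> real (ball_vol q n 4)"
  shows "(\<Sum>x'\<in>S. real (card (ball_on q x {..<n} t \<inter> ball_on q x' {..<n} t)))
         \<le> V * (1 + 2 * W * r + 20 * real (induced_degree n t S x) * r ^ 3)"
proof -
  have fS: "finite S" using finite_subset[OF S finite_cube[OF q]] .
  have r0: "r \<ge> 0" and V0: "V \<ge> 0" unfolding r_def V_def by auto
  define near where "near x' \<longleftrightarrow> x' \<noteq> x \<and> hamming n x x' \<le> 4" for x'
  define nbr where "nbr x' \<longleftrightarrow> x' \<noteq> x \<and> hamming n x x' \<le> 2 * t" for x'
  define g where "g x' = (if x' = x then V else 0) + (if near x' then 2 * r * V else 0)
    + (if nbr x' then 20 * r ^ 3 * V else 0)" for x'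
  have "real (card (ball_on q x {..<n} t \<inter> ball_on q x' {..<n} t)) \<le> g x'" if "x' \<in> S" for x'
  proof -
    have "x \<in> cube q n" "x' \<in> cube q n" using that x S by auto
    from card_ball_inter_le_cases[OF this t]
    have "real (card (ball_on q x {..<n} t \<inter> ball_on q x' {..<n} t))
        \<le> (if x' = x then V else if hamming n x x' \<le> 4 then 2 * r * V
           else if hamming n x x' \<le> 2 * t then 20 * r ^ 3 * V else 0)"
      unfolding r_def V_def .
    moreover have "0 \<le> 2 * r * V" "0 \<le> 20 * r ^ 3 * V" using r0 V0 by auto
    ultimately show ?thesis unfolding g_def near_def nbr_def by (smt (verit))
  qed
  then have "(\<Sum>x'\<in>S. real (card (ball_on q x {..<n} t \<inter> ball_on q x' {..<n} t))) \<le> sum g S"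
    by (rule sum_mono)
  also have "\<dots> = V + 2 * r * V * card {x'\<in>S. near x'} + 20 * r ^ 3 * V * card {x'\<in>S. nbr x'}"
    using fS x by (simp add: g_def sum.distrib sum.inter_filter[symmetric])
  also have "\<dots> \<le> V + 2 * r * V * W + 20 * r ^ 3 * V * real (induced_degree n t S x)"
  proof -
    have "card {x'\<in>S. near x'} \<le> card {x'\<in>S. hamming n x x' \<le> 4}"
      using fS by (intro card_mono) (auto simp: near_def)
    also have "\<dots> \<le> ball_vol q n 4" using card_near_le_ball_vol S x by blast
    finally have "real (card {x'\<in>S. near x'}) \<le> W" unfolding W_def by simp
    moreover have "card {x'\<in>S. nbr x'} = induced_degree n t S x"
      unfolding induced_degree_def nbr_def by (metis hamming_commute)
    ultimately show ?thesis using r0 V0 by (simp add: mult_left_mono)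
  qed
  finally show ?thesis by (simp add: algebra_simps)
qed

lemma sum_card_squared_le:
  fixes B :: "'a \<Rightarrow> 'b set"
  assumes C: "finite C" and S: "finite S" and BC: "\<And>x. x \<in> S \<Longrightarrow> B x \<subseteq> C"
  shows "(\<Sum>x\<in>S. real (card (B x))) ^ 2 \<le> real (card C) * (\<Sum>x\<in>S. \<Sum>x'\<in>S. real (card (B x \<inter> B x')))"
proof -
  define d where "d y = (\<Sum>x\<in>S. if y \<in> B x then 1 else 0 :: real)" for y
  have count: "(\<Sum>y\<in>C. if y \<in> A then 1 else 0 :: real) = real (card A)" if "A \<subseteq> C" for A
    using that C by (simp add: sum.inter_filter[symmetric] Int_absorb1 Collect_mem_eq
        flip: Int_def[of C A])
  have "(\<Sum>y\<in>C. d y) = (\<Sum>x\<in>S. real (card (B x)))"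
    unfolding d_def using BC by (subst sum.swap) (simp add: count)
  moreover have "(\<Sum>y\<in>C. (d y) ^ 2) = (\<Sum>x\<in>S. \<Sum>x'\<in>S. real (card (B x \<inter> B x')))"
  proof -
    have "(\<Sum>y\<in>C. (d y) ^ 2) = (\<Sum>y\<in>C. \<Sum>x\<in>S. \<Sum>x'\<in>S. if y \<in> B x \<inter> B x' then 1 else 0 :: real)"
      unfolding d_def power2_eq_square sum_product by (intro sum.cong refl) auto
    also have "\<dots> = (\<Sum>x\<in>S. \<Sum>x'\<in>S. \<Sum>y\<in>C. if y \<in> B x \<inter> B x' then 1 else 0 :: real)"
      by (subst sum.swap) (simp add: sum.swap[of _ C])
    also have "\<dots> = (\<Sum>x\<in>S. \<Sum>x'\<in>S. real (card (B x \<inter> B x')))"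
      using BC by (intro sum.cong refl count) auto
    finally show ?thesis .
  qed
  ultimately show ?thesis
    using Cauchy_Schwarz_ineq_sum[of "\<lambda>_. 1" d C] by simp
qed

lemma card_le_hamming_bound_mult:
  assumes q: "q \<ge> 1" and S: "S \<subseteq> cube q n" and t: "t < n"
  defines "r \<equiv> real t / real (n - t)" and "W \<equiv> real (ball_vol q n 4)"
    and "D \<equiv> real (max_degree n t S)"
  shows "real (card S) \<le> hamming_bound q n t * (1 + 2 * W * r + 20 * D * r ^ 3)"
proof -
  define V where "V = real (ball_vol q n t)"
  define K where "K = 1 + 2 * W * r + 20 * D * r ^ 3"
  define N where "N = real (card S)"
  define B where "B x = ball_on q x {..<n} t" for x
  have fC: "finite (cube q n)" using finite_cube[OF q] .
  have fS: "finite S" using finite_subset[OF S fC] .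
  have r0: "r \<ge> 0" and V1: "V \<ge> 1" and K0: "K \<ge> 0"
    using ball_vol_ge_1 unfolding r_def V_def K_def W_def D_def by auto
  have "(\<Sum>x\<in>S. real (card (B x))) = N * V"
  proof -
    have "card (B x) = ball_vol q n t" if "x \<in> S" for x
      using that S card_ball_on[of "{..<n}" x q t] unfolding B_def cube_def by auto
    then show ?thesis unfolding N_def V_def by simp
  qed
  moreover have "B x \<subseteq> cube q n" if "x \<in> S" for x
    using that S cube_ball_eq_ball_on unfolding B_def by blast
  ultimately have "(N * V) ^ 2 \<le> real q ^ n * (\<Sum>x\<in>S. \<Sum>x'\<in>S. real (card (B x \<inter> B x')))"
    using sum_card_squared_le[OF fC fS, of B] card_cube[OF q] by simp
  also have "\<dots> \<le> real q ^ n * (\<Sum>x\<in>S. V * K)"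
  proof (intro mult_left_mono sum_mono)
    fix x assume x: "x \<in> S"
    have "real (induced_degree n t S x) \<le> D"
      unfolding D_def max_degree_def using x fS by auto
    then have "V * (1 + 2 * W * r + 20 * real (induced_degree n t S x) * r ^ 3) \<le> V * K"
      unfolding K_def using V1 r0 by (intro mult_left_mono add_left_mono mult_right_mono) auto
    then show "(\<Sum>x'\<in>S. real (card (B x \<inter> B x'))) \<le> V * K"
      using sum_card_ball_inter_le[OF q S x t] unfolding B_def r_def V_def W_def by linarith
  qed simp
  also have "\<dots> = (N * V) * (real q ^ n * K)" unfolding N_def by simp
  finally have sq: "(N * V) * (N * V) \<le> (N * V) * (real q ^ n * K)"
    by (simp only: power2_eq_square)
  have "N * V \<le> real q ^ n * K"
  proof (cases "N * V = 0")
    case True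
    have "0 \<le> real q ^ n * K" using K0 by simp
    then show ?thesis using True by linarith
  next
    case False
    then have "N * V > 0" unfolding N_def V_def by simp
    then show ?thesis using sq mult_le_cancel_left_pos[of "N * V"] by simp
  qed
  then have "N \<le> real q ^ n * K / V" using V1 by (simp add: pos_le_divide_eq)
  then show ?thesis unfolding hamming_bound_def N_def V_def K_def by simp
qed

lemma ball_vol_4_le:
  assumes "n \<ge> 1" "q \<ge> 1"
  shows "real (ball_vol q n 4) \<le> 5 * real n ^ 4 * real q ^ 4"
proof -
  have "(n choose i) * (q - 1) ^ i \<le> n ^ 4 * q ^ 4" if "i \<le> 4" for i
  proof (rule mult_le_mono)
    have "n choose i \<le> n ^ i"
      by (metis binomial_le_pow binomial_eq_0 not_le zero_le)
    also have "\<dots> \<le> n ^ 4" using that assms by (intro power_increasing) auto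
    finally show "n choose i \<le> n ^ 4" .
    have "(q - 1) ^ i \<le> q ^ i" by (intro power_mono) auto
    also have "\<dots> \<le> q ^ 4" using that assms by (intro power_increasing) auto
    finally show "(q - 1) ^ i \<le> q ^ 4" .
  qed
  then have "ball_vol q n 4 \<le> (\<Sum>i=0..(4::nat). n ^ 4 * q ^ 4)"
    unfolding ball_vol_def by (intro sum_mono) auto
  then have "real (ball_vol q n 4) \<le> real (5 * n ^ 4 * q ^ 4)"
    by (simp only: of_nat_le_iff) simp
  then show ?thesis by simp
qed

lemma radius_ratio_le:
  assumes n: "400 \<le> n" and t: "real t \<le> 10 * sqrt (real n)"
  shows "t < n" and "real t / real (n - t) \<le> 20 / sqrt (real n)"
proof -
  define s where "s = sqrt (real n)"
  have s20: "20 \<le> s" unfolding s_def using n by (intro real_le_rsqrt) simp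
  have ns: "real n = s * s" unfolding s_def by simp
  have "10 * s \<le> s * s / 2" using s20 mult_right_mono[OF s20, of s] by simp
  moreover have "real t \<le> 10 * s" using t unfolding s_def .
  ultimately have "real t \<le> real n / 2" unfolding ns by linarith
  then show tn: "t < n" using n by linarith
  then have "s * s / 2 \<le> real (n - t)" using \<open>real t \<le> real n / 2\<close> ns by simp
  then have "real t / real (n - t) \<le> 10 * s / (s * s / 2)"
    using \<open>real t \<le> 10 * s\<close> s20 by (intro frac_le) auto
  also have "\<dots> = 20 / s" using s20 by (simp add: field_simps)
  finally show "real t / real (n - t) \<le> 20 / sqrt (real n)" unfolding s_def .
qed

text \<open>With \<open>s = \<surd>n\<close> and \<open>R = |S|/H_q(n,t) \<ge> s^8\<close>, the first two terms of the bound on \<open>R\<close>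
  are at most \<open>R/2\<close>.\<close>
lemma cubic_term_dominates:
  fixes s R D W r qq :: real
  assumes s_q: "800 * qq ^ 4 \<le> s" and qq: "1 \<le> qq" and s20: "20 \<le> s" and R_ge: "s ^ 8 \<le> R"
    and R_le: "R \<le> 1 + 2 * W * r + 20 * D * r ^ 3"
    and W: "0 \<le> W" "W \<le> 5 * s ^ 8 * qq ^ 4" and r: "0 \<le> r" "r \<le> 20 / s" and D: "0 \<le> D"
  shows "R * s ^ 3 / 320000 \<le> D"
proof -
  have sp: "s > 0" using s20 by simp
  have s8: "s ^ 8 = s * s ^ 7" by (simp add: power_Suc[symmetric] del: power_Suc)
  have "2 * W * r \<le> 2 * (5 * s ^ 8 * qq ^ 4) * (20 / s)"
    using W r by (intro mult_mono) auto
  also have "\<dots> = (800 * qq ^ 4) * s ^ 7 / 4" using sp unfolding s8 by simp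
  also have "\<dots> \<le> s * s ^ 7 / 4" using s_q sp by (intro divide_right_mono mult_right_mono) auto
  finally have lin: "2 * W * r \<le> s ^ 8 / 4" unfolding s8 .
  have "1 \<le> s ^ 8 / 4"
    using s20 power_increasing[of 1 8 s] by simp
  moreover have "20 * D * r ^ 3 \<le> 20 * D * (20 / s) ^ 3"
    using r D by (intro mult_left_mono power_mono) auto
  ultimately have "R \<le> R / 2 + D * 160000 / s ^ 3"
    using R_ge R_le lin by (simp add: power_divide)
  then have "R / 2 \<le> D * 160000 / s ^ 3" by linarith
  then have "R / 2 * s ^ 3 \<le> D * 160000" using sp by (metis pos_le_divide_eq zero_less_power)
  then show ?thesis by simp
qed

lemma degree_lower_bound:
  fixes R D :: real
  assumes q: "q \<ge> 1" and n: "640000 * q ^ 8 + 400 \<le> n" and t: "real t \<le> 10 * sqrt (real n)"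
    and R_ge: "real n ^ 4 \<le> R"
    and R_le: "R \<le> 1 + 2 * real (ball_vol q n 4) * (real t / real (n - t))
                  + 20 * D * (real t / real (n - t)) ^ 3"
    and D: "0 \<le> D"
  shows "R * real n powr (3/2) / 320000 \<le> D"
proof -
  define s where "s = sqrt (real n)"
  have n_s: "real n = s ^ 2" unfolding s_def by simp
  have "real (640000 * q ^ 8 + 400) \<le> real n" using n by (simp only: of_nat_le_iff)
  then have s20: "20 \<le> s" and s_q: "800 * real q ^ 4 \<le> s"
    unfolding s_def using n by (auto intro!: real_le_rsqrt simp: power_mult_distrib power_mult[symmetric])
  have "t < n" and r: "real t / real (n - t) \<le> 20 / s"
    using radius_ratio_le[of n t] n t unfolding s_def by simp_all
  have W: "real (ball_vol q n 4) \<le> 5 * s ^ 8 * real q ^ 4"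
    using ball_vol_4_le[of n q] n q by (simp add: n_s power_mult[symmetric])
  have "R * s ^ 3 / 320000 \<le> D"
    using R_ge unfolding n_s power_mult[symmetric]
    by (intro cubic_term_dominates[OF s_q _ s20 _ R_le _ W _ r D]) (use q in auto)
  moreover have "real n powr (3/2) = s ^ 3"
  proof -
    have "real n powr (3/2) = (real n powr (1/2)) powr 3" by (simp add: powr_powr)
    then show ?thesis unfolding s_def by (simp add: powr_half_sqrt)
  qed
  ultimately show ?thesis by simp
qed

theorem lemma2p1:
  fixes q :: nat
  assumes "q \<ge> 2"
  shows "\<exists>c::real. c > 0 \<and> (\<exists>n0::nat. \<forall>n t S.
           n \<ge> n0 \<longrightarrow> t \<ge> 1 \<longrightarrow> real t \<le> 10 * sqrt (real n) \<longrightarrow>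
           S \<subseteq> cube q n \<longrightarrow> real (card S) \<ge> real n ^ 4 * hamming_bound q n t \<longrightarrow>
           real (max_degree n t S) \<ge> c * (real n powr (3/2) / hamming_bound q n t) * real (card S))"
proof (intro exI conjI allI impI)
  show "(1 / 320000 :: real) > 0" by simp
  fix n t S
  assume n: "640000 * q ^ 8 + 400 \<le> n" and "1 \<le> t" and t: "real t \<le> 10 * sqrt (real n)"
    and S: "S \<subseteq> cube q n" and large: "real n ^ 4 * hamming_bound q n t \<le> real (card S)"
  have q: "q \<ge> 1" using assms by simp
  have tn: "t < n" using radius_ratio_le(1)[OF _ t] n by simp
  have H: "hamming_bound q n t > 0"
    unfolding hamming_bound_def using q ball_vol_ge_1[of q n t] by simp
  define R where "R = real (card S) / hamming_bound q n t"
  have "real n ^ 4 \<le> R"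
    using large H unfolding R_def by (simp add: pos_le_divide_eq)
  moreover have "R \<le> 1 + 2 * real (ball_vol q n 4) * (real t / real (n - t))
      + 20 * real (max_degree n t S) * (real t / real (n - t)) ^ 3"
    using card_le_hamming_bound_mult[OF q S tn] H unfolding R_def by (simp add: pos_divide_le_eq mult.commute)
  ultimately have "R * real n powr (3/2) / 320000 \<le> real (max_degree n t S)"
    by (intro degree_lower_bound[OF q n t]) simp_all
  then show "1 / 320000 * (real n powr (3/2) / hamming_bound q n t) * real (card S)
      \<le> real (max_degree n t S)"
    unfolding R_def by (simp add: field_simps)
qed

end
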